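(* For every input permutation, at every step of algorithm $\mathcal{D}^2\mathcal{I}$ we have $Top(D_1)<Top(I)$ (a statement about an empty stack being considered true).
   Context: The $\mathfrak{D}^2\mathfrak{I}$ machine consists of two decreasing stacks $D_1,D_2$ followed in series by an increasing stack $I$. Elements of $D_1,D_2$ must be in decreasing order from top to bottom (top largest); elements of $I$ in increasing order from top to bottom (top smallest). Operations: $d_0$ pushes the next input element (called $Input$) into $D_1$; $d_1$ moves $Top(D_1)$ to $D_2$; $d_2$ moves $Top(D_2)$ to $I$; $d_3$ pops $Top(I)$ and appends it to the output. Any comparison involving an empty stack is considered true. Conditions: ($\alpha$) $Top(D_2)<Top(I)$; ($\beta$) $Top(D_2)<Top(D_1)$ and $Top(D_1)<Top(I)$; ($\gamma$) $Top(D_1)<Input$, $Input<Top(I)$, and the sequence of input elements from $Input$ up to the first input element larger than $Top(D_2)$ is increasing. Algorithm $\mathcal{D}^2\mathcal{I}$ repeatedly executes the first applicable instruction among: 1. if $Top(I)$ is the next element to be output, perform $d_3$; 2. if the elements contained in $D_1\cup D_2$ are exactly the next elements to be output, move them to the output in increasing order; 3. perform $d_1$ if it is legal and ($\beta$) holds; 4. perform $d_0$ if it is legal and ($\gamma$) holds; 5. perform $d_2$ if it is legal and ($\alpha$) holds; 6. otherwise perform $d_3$. *)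

theory Defs
  imports Main
begin

text \<open>Stacks are lists with the top element at the head.  The remaining input is
  a list whose head is the element called Input.\<close>

record state =
  inp :: "nat list"
  D1  :: "nat list"
  D2  :: "nat list"
  I   :: "nat list"
  out :: "nat list"

fun ltop :: "nat list \<Rightarrow> nat list \<Rightarrow> bool" where
  "ltop [] _ = True"
| "ltop _ [] = True"
| "ltop (x # _) (y # _) = (x < y)"

definition op_d0 :: "state \<Rightarrow> state" where
  "op_d0 s = s\<lparr>inp := tl (inp s), D1 := hd (inp s) # D1 s\<rparr>"
definition op_d1 :: "state \<Rightarrow> state" where
  "op_d1 s = s\<lparr>D1 := tl (D1 s), D2 := hd (D1 s) # D2 s\<rparr>"
definition op_d2 :: "state \<Rightarrow> state" where
  "op_d2 s = s\<lparr>D2 := tl (D2 s), I := hd (D2 s) # I s\<rparr>"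
definition op_d3 :: "state \<Rightarrow> state" where
  "op_d3 s = s\<lparr>I := tl (I s), out := out s @ [hd (I s)]\<rparr>"

text \<open>Legality: D1, D2 decreasing top to bottom (top largest), I increasing (top smallest).\<close>
definition legal_d0 :: "state \<Rightarrow> bool" where
  "legal_d0 s \<longleftrightarrow> inp s \<noteq> [] \<and> ltop (D1 s) (inp s)"
definition legal_d1 :: "state \<Rightarrow> bool" where
  "legal_d1 s \<longleftrightarrow> D1 s \<noteq> [] \<and> ltop (D2 s) (D1 s)"
definition legal_d2 :: "state \<Rightarrow> bool" where
  "legal_d2 s \<longleftrightarrow> D2 s \<noteq> [] \<and> ltop (D2 s) (I s)"

definition cond_alpha :: "state \<Rightarrow> bool" where
  "cond_alpha s \<longleftrightarrow> ltop (D2 s) (I s)"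
definition cond_beta :: "state \<Rightarrow> bool" where
  "cond_beta s \<longleftrightarrow> ltop (D2 s) (D1 s) \<and> ltop (D1 s) (I s)"

text \<open>The input segment from Input up to (and including) the first input element
  larger than Top(D2); the whole remaining input if there is no such element.\<close>
definition gamma_segment :: "state \<Rightarrow> nat list" where
  "gamma_segment s =
     (let big = (\<lambda>x. ltop (D2 s) [x])
      in takeWhile (\<lambda>x. \<not> big x) (inp s) @ take 1 (dropWhile (\<lambda>x. \<not> big x) (inp s)))"

definition cond_gamma :: "state \<Rightarrow> bool" where
  "cond_gamma s \<longleftrightarrow> ltop (D1 s) (inp s) \<and> ltop (inp s) (I s)
                     \<and> sorted_wrt (<) (gamma_segment s)"

text \<open>Input is a permutation of 1..n, so the next element to be output is length out + 1.\<close>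
definition next_out :: "state \<Rightarrow> nat" where
  "next_out s = Suc (length (out s))"

definition rule2_applies :: "state \<Rightarrow> bool" where
  "rule2_applies s \<longleftrightarrow> D1 s @ D2 s \<noteq> [] \<and>
     set (D1 s @ D2 s) = {next_out s ..< next_out s + length (D1 s @ D2 s)}"

text \<open>One step of algorithm D2I; None when no instruction can be executed
  (in particular when d3 is required but I is empty).\<close>
definition step :: "state \<Rightarrow> state option" where
  "step s =
    (if I s \<noteq> [] \<and> hd (I s) = next_out s then Some (op_d3 s)
     else if rule2_applies s then
       Some (s\<lparr>D1 := [], D2 := [], out := out s @ sort (D1 s @ D2 s)\<rparr>)
     else if legal_d1 s \<and> cond_beta s then Some (op_d1 s)
     else if legal_d0 s \<and> cond_gamma s then Some (op_d0 s)
     else if legal_d2 s \<and> cond_alpha s then Some (op_d2 s)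
     else if I s \<noteq> [] then Some (op_d3 s)
     else None)"

definition init_state :: "nat list \<Rightarrow> state" where
  "init_state xs = \<lparr>inp = xs, D1 = [], D2 = [], I = [], out = []\<rparr>"

definition reachable :: "nat list \<Rightarrow> state \<Rightarrow> bool" where
  "reachable xs s \<longleftrightarrow> (\<lambda>a b. step a = Some b)\<^sup>*\<^sup>* (init_state xs) s"

end

theory Submission
  imports Defs
begin

text \<open>The claim is one clause of an invariant that every step of the algorithm preserves:
  the stacks hold distinct elements, \<open>D\<^sub>1\<close> is decreasing, \<open>I\<close> is increasing and
  \<open>Top(D\<^sub>1) < Top(I)\<close>.  Instruction \<open>d\<^sub>0\<close> only pushes an element above \<open>Top(D\<^sub>1)\<close> and
  below \<open>Top(I)\<close> (condition \<open>\<gamma>\<close>).  The only delicate instruction is \<open>d\<^sub>2\<close>: it is executed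
  only when instruction 3 was not, and since \<open>Top(D\<^sub>1) < Top(I)\<close> already holds, the failure
  of \<open>\<beta>\<close> forces \<open>Top(D\<^sub>2) > Top(D\<^sub>1)\<close>, so the new top of \<open>I\<close> still lies above \<open>D\<^sub>1\<close>.\<close>

definition d2i_invariant :: "state \<Rightarrow> bool" where
  "d2i_invariant s \<longleftrightarrow> distinct (inp s @ D1 s @ D2 s @ I s)
      \<and> sorted_wrt (>) (D1 s) \<and> sorted_wrt (<) (I s) \<and> ltop (D1 s) (I s)"

lemma d2i_invariant_init_state:
  "distinct xs \<Longrightarrow> d2i_invariant (init_state xs)"
  by (simp add: d2i_invariant_def init_state_def)

lemma d2i_invariant_op_d3:
  assumes "d2i_invariant s" "I s \<noteq> []"
  shows "d2i_invariant (op_d3 s)"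
proof -
  obtain y ys where "I s = y # ys" using assms(2) by (cases "I s") auto
  with assms(1) show ?thesis
    by (cases "D1 s"; cases ys) (auto simp: d2i_invariant_def op_d3_def)
qed

lemma d2i_invariant_flush:
  "d2i_invariant s \<Longrightarrow> d2i_invariant (s\<lparr>D1 := [], D2 := [], out := zs\<rparr>)"
  by (auto simp: d2i_invariant_def)

lemma d2i_invariant_op_d1:
  assumes "d2i_invariant s" "D1 s \<noteq> []"
  shows "d2i_invariant (op_d1 s)"
proof -
  obtain y ys where "D1 s = y # ys" using assms(2) by (cases "D1 s") auto
  with assms(1) show ?thesis
    by (cases ys; cases "I s") (auto simp: d2i_invariant_def op_d1_def)
qed

lemma d2i_invariant_op_d0:
  assumes inv: "d2i_invariant s" and "legal_d0 s" "cond_gamma s"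
  shows "d2i_invariant (op_d0 s)"
proof -
  obtain y ys where inp: "inp s = y # ys"
    using \<open>legal_d0 s\<close> by (cases "inp s") (auto simp: legal_d0_def)
  have above_D1: "\<forall>z\<in>set (D1 s). z < y"
  proof (cases "D1 s")
    case (Cons d ds)
    with \<open>legal_d0 s\<close> inp have "d < y" by (simp add: legal_d0_def)
    with Cons inv show ?thesis by (auto simp: d2i_invariant_def)
  qed simp
  have below_I: "I s = [] \<or> y < hd (I s)"
    using \<open>cond_gamma s\<close> inp by (cases "I s") (auto simp: cond_gamma_def)
  from inv inp above_D1 below_I show ?thesis
    by (cases "I s") (auto simp: d2i_invariant_def op_d0_def)
qed

lemma d2i_invariant_op_d2:
  assumes inv: "d2i_invariant s" and "legal_d2 s" and no_d1: "\<not> (legal_d1 s \<and> cond_beta s)"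
  shows "d2i_invariant (op_d2 s)"
proof -
  obtain y ys where D2: "D2 s = y # ys"
    using \<open>legal_d2 s\<close> by (cases "D2 s") (auto simp: legal_d2_def)
  have below_I: "\<forall>z\<in>set (I s). y < z"
  proof (cases "I s")
    case (Cons d ds)
    with \<open>legal_d2 s\<close> D2 have "y < d" by (simp add: legal_d2_def)
    with Cons inv show ?thesis by (auto simp: d2i_invariant_def)
  qed simp
  have above_D1: "D1 s = [] \<or> hd (D1 s) < y"
  proof (cases "D1 s")
    case (Cons d ds)
    have "ltop (D1 s) (I s)" using inv by (simp add: d2i_invariant_def)
    with no_d1 Cons D2 have "\<not> y < d" by (auto simp: legal_d1_def cond_beta_def)
    moreover have "d \<noteq> y" using inv Cons D2 by (auto simp: d2i_invariant_def)
    ultimately show ?thesis using Cons by simp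
  qed simp
  from inv D2 below_I above_D1 show ?thesis
    by (cases "D1 s") (auto simp: d2i_invariant_def op_d2_def)
qed

lemma d2i_invariant_step:
  assumes "d2i_invariant s" "step s = Some t"
  shows "d2i_invariant t"
  using assms d2i_invariant_op_d3[OF assms(1)] d2i_invariant_flush[OF assms(1)]
    d2i_invariant_op_d1[OF assms(1)] d2i_invariant_op_d0[OF assms(1)]
    d2i_invariant_op_d2[OF assms(1)]
  by (auto simp: step_def legal_d1_def split: if_splits)

lemma reachable_d2i_invariant:
  assumes "distinct xs" "reachable xs s"
  shows "d2i_invariant s"
proof -
  have "(\<lambda>a b. step a = Some b)\<^sup>*\<^sup>* (init_state xs) s"
    using assms(2) by (simp add: reachable_def)
  then show ?thesis
    by induction (use assms(1) d2i_invariant_init_state d2i_invariant_step in blast)+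
qed

theorem mainTheorem7:
  fixes n :: nat and xs :: "nat list" and s :: state
  assumes "distinct xs" and "set xs = {1..n}"
    and "reachable xs s"
  shows "ltop (D1 s) (I s)"
  using reachable_d2i_invariant[OF assms(1,3)] by (simp add: d2i_invariant_def)

end
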